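(* Let $\mathcal M$ be a non-empty compact, locally connected Hausdorff space, $\vec\varphi:\mathcal M\to\mathbb R^k$ continuous, and $\vec x,\vec y\in\mathbb R^k$ with $x_i\le y_i$ for all $i$. Then $\lim_{\varepsilon\to0^+}\ell_{(\mathcal M,\vec\varphi)}(\vec x,(y_1+\varepsilon,\dots,y_k+\varepsilon))$ equals the number $L(\vec x,\vec y)\in\mathbb N\cup\{+\infty\}$ of equivalence classes of $\mathcal M\langle\vec\varphi\preceq\vec x\rangle$ with respect to the $\langle\vec\varphi\preceq\vec y\rangle$-connectedness relation.
   Context: For $\vec t\in\mathbb R^k$, $\mathcal M\langle\vec\varphi\preceq\vec t\rangle=\{P\in\mathcal M:\varphi_i(P)\le t_i\ \forall i\}$. $P,Q$ are $\langle\vec\varphi\preceq\vec t\rangle$-connected if a connected subset of $\mathcal M\langle\vec\varphi\preceq\vec t\rangle$ contains both. For $\vec x,\vec y$ with $x_i<y_i$ for all $i$, the size function $\ell_{(\mathcal M,\vec\varphi)}(\vec x,\vec y)$ is the number of equivalence classes of $\mathcal M\langle\vec\varphi\preceq\vec x\rangle$ under $\langle\vec\varphi\preceq\vec y\rangle$-connectedness. *)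

theory Defs
  imports "HOL-Analysis.Analysis"
begin

definition sublevel :: "'a topology \<Rightarrow> ('a \<Rightarrow> real^'k) \<Rightarrow> real^'k \<Rightarrow> 'a set" where
  "sublevel X phi t = {P \<in> topspace X. \<forall>i. phi P $ i \<le> t $ i}"

definition sub_connected :: "'a topology \<Rightarrow> ('a \<Rightarrow> real^'k) \<Rightarrow> real^'k \<Rightarrow> 'a \<Rightarrow> 'a \<Rightarrow> bool" where
  "sub_connected X phi t P Q \<longleftrightarrow>
     (\<exists>C. C \<subseteq> sublevel X phi t \<and> connectedin X C \<and> P \<in> C \<and> Q \<in> C)"

definition num_classes :: "'a topology \<Rightarrow> ('a \<Rightarrow> real^'k) \<Rightarrow> real^'k \<Rightarrow> real^'k \<Rightarrow> enat" where
  "num_classes X phi x y =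
     (let Q = sublevel X phi x // {(P, P'). P \<in> sublevel X phi x \<and> P' \<in> sublevel X phi x
                                             \<and> sub_connected X phi y P P'}
      in if finite Q then enat (card Q) else \<infinity>)"

text \<open>The size function ell(x,y) (meaningful for x_i < y_i for all i).\<close>
definition size_function :: "'a topology \<Rightarrow> ('a \<Rightarrow> real^'k) \<Rightarrow> real^'k \<Rightarrow> real^'k \<Rightarrow> enat" where
  "size_function X phi x y = num_classes X phi x y"

end

theory Submission
  imports Defs
begin

text \<open>
  As \<open>e\<close> decreases to \<open>0\<close>, the sets \<open>M<phi \<preceq> y + e>\<close> shrink, so
  \<open><phi \<preceq> y + e>\<close>-connectedness only gets finer and \<open>ell(x, y + e)\<close> increases, staying
  bounded by \<open>L(x, y)\<close>. Conversely, if \<open>P\<close> and \<open>Q\<close> are \<open><phi \<preceq> y + 1/n>\<close>-connected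
  for every \<open>n\<close>, the components of \<open>P\<close> in these closed sublevel sets form a decreasing
  sequence of closed connected sets of a compact Hausdorff space. Their intersection is
  connected, contains \<open>Q\<close> and lies in \<open>M<phi \<preceq> y>\<close>. Hence finitely many pairwise
  \<open><phi \<preceq> y>\<close>-inequivalent points stay \<open><phi \<preceq> y + e>\<close>-inequivalent for all small
  \<open>e\<close>, so \<open>ell(x, y + e)\<close> eventually exceeds every finite lower bound of \<open>L(x, y)\<close>.
\<close>

definition ecard :: "'b set \<Rightarrow> enat" where
  "ecard B = (if finite B then enat (card B) else \<infinity>)"

lemma enat_le_ecard_iff: "enat m \<le> ecard B \<longleftrightarrow> (\<exists>T\<subseteq>B. finite T \<and> card T = m)"
proof (cases "finite B")
  case True
  show ?thesis
  proof
    assume "enat m \<le> ecard B"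
    then have "m \<le> card B"
      using True by (simp add: ecard_def)
    then show "\<exists>T\<subseteq>B. finite T \<and> card T = m"
      using True by (meson ex_card finite_subset)
  next
    assume "\<exists>T\<subseteq>B. finite T \<and> card T = m"
    then obtain T where "T \<subseteq> B" "card T = m"
      by blast
    then have "m \<le> card B"
      using card_mono[OF True] by blast
    then show "enat m \<le> ecard B"
      using True by (simp add: ecard_def)
  qed
next
  case False
  then show ?thesis
    by (simp add: ecard_def) (meson infinite_arbitrarily_large)
qed

lemma enat_le_by_finite_bounds:
  fixes a b :: enat
  assumes "\<And>m. enat m \<le> a \<Longrightarrow> enat m \<le> b"
  shows "a \<le> b"
proof (cases a)
  case (enat n)
  then show ?thesis using assms[of n] by simp
next
  case infinity
  then have "enat (Suc n) \<le> b" for n using assms by simp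
  then show ?thesis
    by (metis enat_ord_simps(1,3) not_less_eq_eq order_refl enat.exhaust)
qed

lemma enat_le_ecard_quotient_iff:
  assumes "equiv A R"
  shows "enat m \<le> ecard (A//R) \<longleftrightarrow>
           (\<exists>S\<subseteq>A. finite S \<and> card S = m \<and> (\<forall>a\<in>S. \<forall>b\<in>S. (a, b) \<in> R \<longrightarrow> a = b))"
proof -
  let ?class = "\<lambda>a. R``{a}"
  have inj_iff: "inj_on ?class S \<longleftrightarrow> (\<forall>a\<in>S. \<forall>b\<in>S. (a, b) \<in> R \<longrightarrow> a = b)"
    if "S \<subseteq> A" for S
    using that eq_equiv_class_iff[OF assms] unfolding inj_on_def by (metis subsetD)
  have quotient_image: "A//R = ?class ` A"
    by (auto simp: quotient_def)
  show ?thesis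
  proof
    assume "enat m \<le> ecard (A//R)"
    then obtain T where T: "T \<subseteq> ?class ` A" "finite T" "card T = m"
      unfolding enat_le_ecard_iff quotient_image by blast
    then obtain S where S: "S \<subseteq> A" "inj_on ?class S" "T = ?class ` S"
      unfolding subset_image_inj by blast
    have "finite S"
      using T(2) unfolding S(3) finite_image_iff[OF S(2)] .
    moreover have "card S = m"
      using T(3) unfolding S(3) card_image[OF S(2)] .
    moreover have "\<forall>a\<in>S. \<forall>b\<in>S. (a, b) \<in> R \<longrightarrow> a = b"
      using inj_iff[OF S(1)] S(2) ..
    ultimately show "\<exists>S\<subseteq>A. finite S \<and> card S = m \<and> (\<forall>a\<in>S. \<forall>b\<in>S. (a, b) \<in> R \<longrightarrow> a = b)"
      using S(1) by blast
  next
    assume "\<exists>S\<subseteq>A. finite S \<and> card S = m \<and> (\<forall>a\<in>S. \<forall>b\<in>S. (a, b) \<in> R \<longrightarrow> a = b)"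
    then obtain S where S: "S \<subseteq> A" "finite S" "card S = m"
      and separated: "\<forall>a\<in>S. \<forall>b\<in>S. (a, b) \<in> R \<longrightarrow> a = b"
      by blast
    have inj: "inj_on ?class S"
      using inj_iff[OF S(1)] separated ..
    have "?class ` S \<subseteq> A//R" "finite (?class ` S)" "card (?class ` S) = m"
      using S card_image[OF inj] unfolding quotient_image by auto
    then show "enat m \<le> ecard (A//R)"
      unfolding enat_le_ecard_iff by blast
  qed
qed

lemma connectedin_Inter_decseq:
  fixes D :: "nat \<Rightarrow> 'a set"
  assumes cH: "compact_space X" "Hausdorff_space X"
    and D: "\<And>n. closedin X (D n)" "\<And>n. connectedin X (D n)" "decseq D"
  shows "connectedin X (\<Inter>n. D n)"
proof -
  let ?E = "\<Inter>n. D n"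
  have E_closed: "closedin X ?E"
    using D(1) by (intro closedin_Inter) auto
  have False if E12: "closedin X E1" "closedin X E2" "?E \<subseteq> E1 \<union> E2" "E1 \<inter> E2 \<inter> ?E = {}"
    "E1 \<inter> ?E \<noteq> {}" "E2 \<inter> ?E \<noteq> {}" for E1 E2
  proof -
    have "compactin X (E1 \<inter> ?E)" "compactin X (E2 \<inter> ?E)"
      using E_closed E12(1,2) cH(1) by (auto intro: closedin_compact_space)
    moreover have "disjnt (E1 \<inter> ?E) (E2 \<inter> ?E)"
      using E12(4) by (auto simp: disjnt_def)
    ultimately obtain U V where UV: "openin X U" "openin X V" "E1 \<inter> ?E \<subseteq> U" "E2 \<inter> ?E \<subseteq> V"
      "disjnt U V"
      using cH(2) unfolding Hausdorff_space_compact_sets by metis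
    have E_UV: "(\<Inter>n. D n - (U \<union> V)) = {}"
      using E12(3) UV(3,4) by auto
    have "\<exists>n. D n - (U \<union> V) = {}"
    proof (rule ccontr)
      assume "\<nexists>n. D n - (U \<union> V) = {}"
      moreover have "closedin X (D n - (U \<union> V))" for n
        using D(1) UV(1,2) by (intro closedin_diff openin_Un)
      moreover have "decseq (\<lambda>n. D n - (U \<union> V))"
        using D(3) by (auto simp: decseq_def)
      ultimately show False
        using compact_space_imp_nest[OF cH(1)] E_UV by metis
    qed
    then obtain n where "D n \<subseteq> U \<union> V"
      by auto
    moreover have "U \<inter> V \<inter> D n = {}"
      using UV(5) by (auto simp: disjnt_def)
    moreover have "U \<inter> D n \<noteq> {}" "V \<inter> D n \<noteq> {}"
      using E12(5,6) UV(3,4) by auto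
    ultimately show False
      using connectedinD[OF D(2) UV(1,2)] by metis
  qed
  then show ?thesis
    unfolding connectedin_closedin using E_closed closedin_subset by metis
qed

lemma connected_component_of_Inter_decseq:
  fixes K :: "nat \<Rightarrow> 'a set"
  assumes cH: "compact_space X" "Hausdorff_space X"
    and K: "\<And>n. closedin X (K n)" "decseq K"
    and PQ: "\<And>n. connected_component_of (subtopology X (K n)) P Q"
  shows "connected_component_of (subtopology X (\<Inter>n. K n)) P Q"
proof -
  define D where "D n = connected_component_of_set (subtopology X (K n)) P" for n
  have D_sub: "D n \<subseteq> K n" for n
    using connected_component_of_subset_topspace D_def by fastforce
  have D_connected: "connectedin X (D n)" for n
    using connectedin_connected_component_of[of "subtopology X (K n)" P]
    by (simp add: connectedin_subtopology D_def)
  have D_closed: "closedin X (D n)" for n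
    using closedin_connected_component_of closedin_trans_full K(1) D_def by metis
  have "decseq D"
  proof (rule decseq_SucI)
    fix n
    have "connectedin (subtopology X (K n)) (D (Suc n))"
      using D_connected D_sub[of "Suc n"] K(2)
      by (metis connectedin_subtopology decseq_SucD order_trans)
    then show "D (Suc n) \<subseteq> D n"
      using connected_component_of_maximal PQ D_def
      by (metis connected_component_of_refl connected_component_in_topspace mem_Collect_eq)
  qed
  then have "connectedin X (\<Inter>n. D n)"
    using connectedin_Inter_decseq cH D_closed D_connected by blast
  moreover have "P \<in> (\<Inter>n. D n)" "Q \<in> (\<Inter>n. D n)"
    using PQ connected_component_of_refl connected_component_in_topspace
    by (fastforce simp: D_def)+
  moreover have "(\<Inter>n. D n) \<subseteq> (\<Inter>n. K n)"
    using D_sub by blast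
  ultimately show ?thesis
    unfolding connected_component_of_def connectedin_subtopology by blast
qed

lemma sublevel_mono:
  assumes "\<forall>i. t $ i \<le> t' $ i"
  shows "sublevel X phi t \<subseteq> sublevel X phi t'"
  using assms order.trans unfolding sublevel_def by blast

lemma closedin_sublevel:
  assumes "continuous_map X euclidean phi"
  shows "closedin X (sublevel X phi t)"
proof -
  have "sublevel X phi t = {P \<in> topspace X. phi P \<in> {..t}}"
    by (auto simp: sublevel_def less_eq_vec_def)
  then show ?thesis
    using closedin_continuous_map_preimage[OF assms, of "{..t}"] by simp
qed

lemma sublevel_eq_Inter:
  "sublevel X phi y = (\<Inter>n. sublevel X phi (\<chi> i. y $ i + 1 / Suc n))"
proof
  show "sublevel X phi y \<subseteq> (\<Inter>n. sublevel X phi (\<chi> i. y $ i + 1 / Suc n))"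
    by (intro INT_greatest sublevel_mono) simp
next
  show "(\<Inter>n. sublevel X phi (\<chi> i. y $ i + 1 / Suc n)) \<subseteq> sublevel X phi y"
  proof
    fix P assume "P \<in> (\<Inter>n. sublevel X phi (\<chi> i. y $ i + 1 / Suc n))"
    then have P: "P \<in> topspace X" "phi P $ i \<le> y $ i + 1 / Suc n" for i n
      by (auto simp: sublevel_def)
    have "phi P $ i \<le> y $ i" for i
    proof (rule field_le_epsilon)
      fix e :: real assume "0 < e"
      then obtain n where "1 / Suc n < e"
        using nat_approx_posE by blast
      then show "phi P $ i \<le> y $ i + e"
        using P(2)[of i n] by linarith
    qed
    then show "P \<in> sublevel X phi y"
      using P(1) by (simp add: sublevel_def)
  qed
qed

lemma sub_connected_iff_connected_component_of:
  "sub_connected X phi t P Q \<longleftrightarrow> connected_component_of (subtopology X (sublevel X phi t)) P Q"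
  by (simp add: sub_connected_def connected_component_of_def connectedin_subtopology) blast

lemma sub_connected_mono:
  assumes "\<forall>i. t $ i \<le> t' $ i" "sub_connected X phi t P Q"
  shows "sub_connected X phi t' P Q"
proof -
  obtain C where "C \<subseteq> sublevel X phi t" "connectedin X C" "P \<in> C" "Q \<in> C"
    using assms(2) unfolding sub_connected_def by blast
  then show ?thesis
    unfolding sub_connected_def using sublevel_mono[OF assms(1), of X phi]
    by (intro exI[of _ C]) auto
qed

lemma sub_connected_from_above:
  assumes cH: "compact_space X" "Hausdorff_space X" and phi: "continuous_map X euclidean phi"
    and PQ: "\<And>n. sub_connected X phi (\<chi> i. y $ i + 1 / Suc n) P Q"
  shows "sub_connected X phi y P Q"
proof -
  let ?K = "\<lambda>n. sublevel X phi (\<chi> i. y $ i + 1 / Suc n)"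
  have "decseq ?K"
    by (intro decseq_SucI sublevel_mono) (simp add: frac_le)
  moreover have "connected_component_of (subtopology X (?K n)) P Q" for n
    using PQ[of n] unfolding sub_connected_iff_connected_component_of .
  ultimately have "connected_component_of (subtopology X (\<Inter>n. ?K n)) P Q"
    by (rule connected_component_of_Inter_decseq[OF cH closedin_sublevel[OF phi]])
  then show ?thesis
    unfolding sub_connected_iff_connected_component_of sublevel_eq_Inter[of X phi y] .
qed

lemma eventually_not_sub_connected:
  assumes "compact_space X" "Hausdorff_space X" "continuous_map X euclidean phi"
    and "\<not> sub_connected X phi y P Q"
  shows "\<forall>\<^sub>F e in at_right 0. \<not> sub_connected X phi (\<chi> i. y $ i + e) P Q"
proof -
  obtain n where n: "\<not> sub_connected X phi (\<chi> i. y $ i + 1 / Suc n) P Q"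
    using sub_connected_from_above[OF assms(1-3)] assms(4) by blast
  have "\<forall>\<^sub>F e in at_right 0. e \<in> {0<..<1 / Suc n}"
    by (rule eventually_at_right_real) simp
  then show ?thesis
  proof (rule eventually_mono)
    fix e :: real assume "e \<in> {0<..<1 / Suc n}"
    then have "\<forall>i. (\<chi> i. y $ i + e) $ i \<le> (\<chi> i. y $ i + 1 / Suc n) $ i"
      by simp
    then show "\<not> sub_connected X phi (\<chi> i. y $ i + e) P Q"
      using n sub_connected_mono by metis
  qed
qed

lemma equiv_sub_connected:
  assumes "\<forall>i. x $ i \<le> t $ i"
  shows "equiv (sublevel X phi x)
           {(P, P'). P \<in> sublevel X phi x \<and> P' \<in> sublevel X phi x \<and> sub_connected X phi t P P'}"
    (is "equiv ?A ?R")
proof (rule equivI)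
  show "?R \<subseteq> ?A \<times> ?A"
    by auto
  show "refl_on ?A ?R"
  proof (rule refl_onI)
    fix P assume "P \<in> ?A"
    moreover from this have "P \<in> sublevel X phi t"
      using sublevel_mono[OF assms, of X phi] by blast
    ultimately show "(P, P) \<in> ?R"
      by (simp add: sub_connected_iff_connected_component_of connected_component_of_refl sublevel_def)
  qed
  show "sym ?R"
    by (rule symI) (auto simp: sub_connected_def)
  show "trans ?R"
  proof (rule transI)
    fix P Q Z assume "(P, Q) \<in> ?R" "(Q, Z) \<in> ?R"
    then show "(P, Z) \<in> ?R"
      unfolding sub_connected_iff_connected_component_of
      using connected_component_of_trans by fastforce
  qed
qed

lemma enat_le_num_classes_iff:
  assumes "\<forall>i. x $ i \<le> t $ i"
  shows "enat m \<le> num_classes X phi x t \<longleftrightarrow>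
           (\<exists>S\<subseteq>sublevel X phi x. finite S \<and> card S = m \<and>
              (\<forall>P\<in>S. \<forall>Q\<in>S. sub_connected X phi t P Q \<longrightarrow> P = Q))"
proof -
  have "num_classes X phi x t = ecard (sublevel X phi x //
          {(P, P'). P \<in> sublevel X phi x \<and> P' \<in> sublevel X phi x \<and> sub_connected X phi t P P'})"
    by (simp add: num_classes_def ecard_def)
  also have "enat m \<le> \<dots> \<longleftrightarrow> (\<exists>S\<subseteq>sublevel X phi x. finite S \<and> card S = m \<and>
              (\<forall>P\<in>S. \<forall>Q\<in>S. sub_connected X phi t P Q \<longrightarrow> P = Q))"
    by (subst enat_le_ecard_quotient_iff[OF equiv_sub_connected[OF assms]]) blast
  finally show ?thesis .
qed

lemma num_classes_antimono:
  assumes "\<forall>i. x $ i \<le> t $ i" "\<forall>i. t $ i \<le> t' $ i"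
  shows "num_classes X phi x t' \<le> num_classes X phi x t"
proof (rule enat_le_by_finite_bounds)
  have xt': "\<forall>i. x $ i \<le> t' $ i"
    using assms order_trans by blast
  fix m assume "enat m \<le> num_classes X phi x t'"
  then obtain S where S: "S \<subseteq> sublevel X phi x" "finite S" "card S = m"
    and separated: "\<forall>P\<in>S. \<forall>Q\<in>S. sub_connected X phi t' P Q \<longrightarrow> P = Q"
    unfolding enat_le_num_classes_iff[OF xt'] by blast
  have "\<forall>P\<in>S. \<forall>Q\<in>S. sub_connected X phi t P Q \<longrightarrow> P = Q"
    using separated sub_connected_mono[OF assms(2)] by metis
  with S show "enat m \<le> num_classes X phi x t"
    unfolding enat_le_num_classes_iff[OF assms(1)] by blast
qed

lemma eventually_enat_le_num_classes:
  assumes cH: "compact_space X" "Hausdorff_space X" and phi: "continuous_map X euclidean phi"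
    and xy: "\<forall>i. x $ i \<le> y $ i" and m: "enat m \<le> num_classes X phi x y"
  shows "\<forall>\<^sub>F e in at_right 0. enat m \<le> num_classes X phi x (\<chi> i. y $ i + e)"
proof -
  obtain S where S: "S \<subseteq> sublevel X phi x" "finite S" "card S = m"
    and separated: "\<forall>P\<in>S. \<forall>Q\<in>S. sub_connected X phi y P Q \<longrightarrow> P = Q"
    using m unfolding enat_le_num_classes_iff[OF xy] by blast
  have "\<forall>\<^sub>F e in at_right 0. sub_connected X phi (\<chi> i. y $ i + e) P Q \<longrightarrow> P = Q"
    if "P \<in> S" "Q \<in> S" for P Q
  proof (cases "P = Q")
    case False
    then have "\<not> sub_connected X phi y P Q"
      using separated that by blast
    then show ?thesis
      by (rule eventually_mono[OF eventually_not_sub_connected[OF cH phi]]) simp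
  qed simp
  then have "\<forall>\<^sub>F e in at_right 0. \<forall>P\<in>S. \<forall>Q\<in>S. sub_connected X phi (\<chi> i. y $ i + e) P Q \<longrightarrow> P = Q"
    by (intro eventually_ball_finite S(2) ballI)
  moreover have "\<forall>\<^sub>F e in at_right 0. (0::real) < e"
    by (rule eventually_at_right_less)
  ultimately show ?thesis
  proof (rule eventually_elim2)
    fix e :: real
    assume separated_e: "\<forall>P\<in>S. \<forall>Q\<in>S. sub_connected X phi (\<chi> i. y $ i + e) P Q \<longrightarrow> P = Q"
      and "0 < e"
    then have xe: "\<forall>i. x $ i \<le> (\<chi> i. y $ i + e) $ i"
      using xy by (simp add: add_increasing2)
    show "enat m \<le> num_classes X phi x (\<chi> i. y $ i + e)"
      unfolding enat_le_num_classes_iff[OF xe] using S separated_e by blast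
  qed
qed

theorem lemma5p2:
  fixes X :: "'a topology" and phi :: "'a \<Rightarrow> real^'k" and x y :: "real^'k"
  assumes "topspace X \<noteq> {}"
    and "compact_space X"
    and "locally_connected_space X"
    and "Hausdorff_space X"
    and "continuous_map X euclidean phi"
    and "\<forall>i. x $ i \<le> y $ i"
  shows "((\<lambda>e::real. size_function X phi x (\<chi> i. y $ i + e))
           \<longlongrightarrow> num_classes X phi x y) (at_right 0)"
  unfolding size_function_def
proof (rule order_tendstoI)
  fix a assume "num_classes X phi x y < a"
  moreover have "\<forall>\<^sub>F e in at_right 0. num_classes X phi x (\<chi> i. y $ i + e) \<le> num_classes X phi x y"
    using eventually_at_right_less
    by (rule eventually_mono) (simp add: assms(6) num_classes_antimono)
  ultimately show "\<forall>\<^sub>F e in at_right 0. num_classes X phi x (\<chi> i. y $ i + e) < a"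
    by (auto elim: eventually_mono)
next
  fix a assume "a < num_classes X phi x y"
  then obtain k where a: "a = enat k" and "enat (Suc k) \<le> num_classes X phi x y"
    by (cases a) (auto simp: Suc_ile_eq)
  then have "\<forall>\<^sub>F e in at_right 0. enat (Suc k) \<le> num_classes X phi x (\<chi> i. y $ i + e)"
    using eventually_enat_le_num_classes[OF assms(2,4,5,6)] by blast
  then show "\<forall>\<^sub>F e in at_right 0. a < num_classes X phi x (\<chi> i. y $ i + e)"
    by (rule eventually_mono) (simp add: a Suc_ile_eq)
qed

end
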